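(* For every $y\in(0,1)$, $$\frac{\pi}{2}\,y\cot\left(\frac{\pi y}{2}\right)\log y\le\log\left(\sin\left(\frac{\pi y}{2}\right)\right),\qquad y\coth(y)\log y\le\log(\sinh(y)),$$ $$\log\left(\tan\left(\frac{\pi y}{2}\right)\right)\ge\frac{\pi}{2}\,y\log(y)\csc\left(\frac{\pi y}{2}\right)\sec\left(\frac{\pi y}{2}\right).$$ *)

theory Defs
  imports Complex_Main
begin

definition coth :: "real \<Rightarrow> real" where "coth x = cosh x / sinh x"
definition csc :: "real \<Rightarrow> real" where "csc x = 1 / sin x"
definition sec :: "real \<Rightarrow> real" where "sec x = 1 / cos x"

end

theory Submission
  imports Defs
begin

text \<open>
  All three inequalities have negative logarithms on the left. For the hyperbolic and the tangent
  inequality the factors \<open>y coth y\<close> and \<open>u / (sin u cos u)\<close> (with \<open>u = \<pi>y/2\<close>) are at least 1, so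
  the left-hand side is at most \<open>ln y\<close>, while \<open>sinh y \<ge> y\<close> and \<open>tan u \<ge> u \<ge> y\<close>.
  The sine inequality is sharper: \<open>ln (sin (\<pi>x/2)) - (\<pi>x/2) cot (\<pi>x/2) ln x\<close> vanishes at \<open>x = 1\<close>
  and has derivative \<open>(\<pi>/2) ln x (u - sin u cos u) / sin\<^sup>2 u \<le> 0\<close> on \<open>(0, 1]\<close>.
\<close>

lemma sinh_ge_self:
  fixes y :: real
  assumes "0 \<le> y"
  shows "y \<le> sinh y"
proof -
  have "(\<lambda>x. sinh x - x) 0 \<le> (\<lambda>x. sinh x - x) y"
  proof (rule DERIV_nonneg_imp_nondecreasing[OF assms])
    fix x :: real
    have "((\<lambda>x. sinh x - x) has_real_derivative cosh x - 1) (at x)"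
      by (auto intro!: derivative_eq_intros)
    then show "\<exists>d. ((\<lambda>x. sinh x - x) has_real_derivative d) (at x) \<and> 0 \<le> d"
      using cosh_real_ge_1[of x] by auto
  qed
  then show ?thesis by simp
qed

lemma sinh_le_mult_cosh:
  fixes y :: real
  assumes "0 \<le> y"
  shows "sinh y \<le> y * cosh y"
proof -
  have "(\<lambda>x. x * cosh x - sinh x) 0 \<le> (\<lambda>x. x * cosh x - sinh x) y"
  proof (rule DERIV_nonneg_imp_nondecreasing[OF assms])
    fix x :: real
    assume "0 \<le> x"
    have "((\<lambda>x. x * cosh x - sinh x) has_real_derivative x * sinh x) (at x)"
      by (auto intro!: derivative_eq_intros)
    then show "\<exists>d. ((\<lambda>x. x * cosh x - sinh x) has_real_derivative d) (at x) \<and> 0 \<le> d"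
      using \<open>0 \<le> x\<close> by auto
  qed
  then show ?thesis by simp
qed

lemma mult_cos_le_sin:
  fixes u :: real
  assumes "0 \<le> u" "u \<le> pi"
  shows "u * cos u \<le> sin u"
proof -
  have "(\<lambda>x. sin x - x * cos x) 0 \<le> (\<lambda>x. sin x - x * cos x) u"
  proof (rule DERIV_nonneg_imp_nondecreasing[OF assms(1)])
    fix x :: real
    assume "0 \<le> x" "x \<le> u"
    have "((\<lambda>x. sin x - x * cos x) has_real_derivative x * sin x) (at x)"
      by (auto intro!: derivative_eq_intros)
    moreover have "0 \<le> x * sin x"
      using \<open>0 \<le> x\<close> \<open>x \<le> u\<close> assms(2) by (simp add: sin_ge_zero)
    ultimately show "\<exists>d. ((\<lambda>x. sin x - x * cos x) has_real_derivative d) (at x) \<and> 0 \<le> d"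
      by blast
  qed
  then show ?thesis by simp
qed

lemma sin_mult_cos_le:
  fixes u :: real
  assumes "0 \<le> u"
  shows "sin u * cos u \<le> u"
  using sin_x_le_x[of "2 * u"] assms by (simp add: sin_double)

lemma mult_ln_le_ln:
  fixes c y z :: real
  assumes "1 \<le> c" "0 < y" "y \<le> 1" "y \<le> z"
  shows "c * ln y \<le> ln z"
proof -
  have "c * ln y \<le> 1 * ln y"
    using assms by (intro mult_right_mono_neg) auto
  also have "\<dots> \<le> ln z"
    using assms by simp
  finally show ?thesis .
qed

lemma ln_sin_minus_cot_ln_has_derivative:
  fixes x :: real
  assumes "0 < x" "0 < sin (pi * x / 2)"
  shows "((\<lambda>x. ln (sin (pi * x / 2)) - pi / 2 * x * cot (pi * x / 2) * ln x) has_real_derivative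
      pi / 2 * ln x * (pi * x / 2 - sin (pi * x / 2) * cos (pi * x / 2)) / (sin (pi * x / 2))\<^sup>2)
    (at x)"
proof -
  note [derivative_intros] = DERIV_cot[THEN DERIV_chain2]
  show ?thesis
    using assms
    by (auto intro!: derivative_eq_intros) (simp add: cot_def field_simps power2_eq_square)
qed

lemma cot_mult_ln_le_ln_sin:
  fixes y :: real
  assumes "0 < y" "y \<le> 1"
  shows "pi / 2 * y * cot (pi * y / 2) * ln y \<le> ln (sin (pi * y / 2))"
proof -
  define G where "G x = ln (sin (pi * x / 2)) - pi / 2 * x * cot (pi * x / 2) * ln x" for x
  have "G 1 \<le> G y"
  proof (rule DERIV_nonpos_imp_nonincreasing[OF assms(2)])
    fix x :: real
    assume x: "y \<le> x" "x \<le> 1"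
    define u where "u = pi * x / 2"
    have u: "0 < u" "u \<le> pi / 2"
      using x assms by (auto simp: u_def)
    then have "sin u > 0"
      by (intro sin_gt_zero) auto
    have "pi / 2 * ln x \<le> 0"
      using x assms by (simp add: mult_nonneg_nonpos)
    moreover have "0 \<le> u - sin u * cos u"
      using sin_mult_cos_le[of u] u by simp
    ultimately have "pi / 2 * ln x * (u - sin u * cos u) / (sin u)\<^sup>2 \<le> 0"
      by (simp add: divide_nonpos_nonneg mult_nonpos_nonneg)
    moreover have "(G has_real_derivative pi / 2 * ln x * (u - sin u * cos u) / (sin u)\<^sup>2) (at x)"
      unfolding G_def[abs_def] u_def
      using \<open>sin u > 0\<close> x assms by (intro ln_sin_minus_cot_ln_has_derivative) (auto simp: u_def)
    ultimately show "\<exists>d. (G has_real_derivative d) (at x) \<and> d \<le> 0"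
      by blast
  qed
  moreover have "G 1 = 0"
    by (simp add: G_def)
  ultimately show ?thesis
    by (simp add: G_def)
qed

lemma coth_mult_ln_le_ln_sinh:
  fixes y :: real
  assumes "0 < y" "y \<le> 1"
  shows "y * coth y * ln y \<le> ln (sinh y)"
proof (rule mult_ln_le_ln[OF _ assms])
  show "1 \<le> y * coth y"
    using sinh_le_mult_cosh[of y] assms by (simp add: coth_def field_simps)
  show "y \<le> sinh y"
    using sinh_ge_self[of y] assms by simp
qed

lemma csc_sec_mult_ln_le_ln_tan:
  fixes y :: real
  assumes "0 < y" "y < 1"
  shows "pi / 2 * y * ln y * csc (pi * y / 2) * sec (pi * y / 2) \<le> ln (tan (pi * y / 2))"
proof -
  define u where "u = pi * y / 2"
  have u: "0 < u" "u < pi / 2"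
    using assms by (auto simp: u_def)
  have "sin u > 0" "cos u > 0"
    using u by (auto intro: sin_gt_zero cos_gt_zero)
  have "u / (sin u * cos u) * ln y \<le> ln (tan u)"
  proof (rule mult_ln_le_ln)
    show "1 \<le> u / (sin u * cos u)"
      using sin_mult_cos_le[of u] u \<open>sin u > 0\<close> \<open>cos u > 0\<close> by simp
    have "y \<le> u"
      using assms pi_ge_two by (simp add: u_def)
    also have "u \<le> tan u"
      using mult_cos_le_sin[of u] u \<open>cos u > 0\<close> by (simp add: tan_def field_simps)
    finally show "y \<le> tan u" .
  qed (use assms in auto)
  then show ?thesis
    by (simp add: u_def csc_def sec_def)
qed

theorem lemma4p4:
  fixes y :: real
  assumes "0 < y" and "y < 1"
  shows "pi / 2 * y * cot (pi * y / 2) * ln y \<le> ln (sin (pi * y / 2)) \<and>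
         y * coth y * ln y \<le> ln (sinh y) \<and>
         ln (tan (pi * y / 2)) \<ge> pi / 2 * y * ln y * csc (pi * y / 2) * sec (pi * y / 2)"
  using assms cot_mult_ln_le_ln_sin coth_mult_ln_le_ln_sinh csc_sec_mult_ln_le_ln_tan
  by simp

end
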